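(* Let $G=A\oplus D$ be an abelian group with $A$ reduced and $D$ divisible. Then $G$ is uniformly strongly co-Hopfian if and only if both $A$ and $D$ are uniformly strongly co-Hopfian.
   Context: All groups are abelian. A group $G$ is uniformly strongly co-Hopfian if there is a fixed $m\in\mathbb N$ such that $\phi^m(G)=\phi^{m+1}(G)$ for every endomorphism $\phi$ of $G$. *)

theory Defs
  imports Main
begin

fun nsmul :: "nat \<Rightarrow> 'a::ab_group_add \<Rightarrow> 'a" where
  "nsmul 0 x = 0"
| "nsmul (Suc n) x = x + nsmul n x"

definition is_subgroup :: "'a::ab_group_add set \<Rightarrow> bool" where
  "is_subgroup H \<longleftrightarrow> 0 \<in> H \<and> (\<forall>x\<in>H. \<forall>y\<in>H. x + y \<in> H) \<and> (\<forall>x\<in>H. - x \<in> H)"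

definition is_endo :: "'a::ab_group_add set \<Rightarrow> ('a \<Rightarrow> 'a) \<Rightarrow> bool" where
  "is_endo H f \<longleftrightarrow> (\<forall>x\<in>H. f x \<in> H) \<and> (\<forall>x\<in>H. \<forall>y\<in>H. f (x + y) = f x + f y)"

definition divisible_grp :: "'a::ab_group_add set \<Rightarrow> bool" where
  "divisible_grp H \<longleftrightarrow> (\<forall>x\<in>H. \<forall>n::nat. n > 0 \<longrightarrow> (\<exists>y\<in>H. nsmul n y = x))"

definition reduced_grp :: "'a::ab_group_add set \<Rightarrow> bool" where
  "reduced_grp H \<longleftrightarrow> (\<forall>K. is_subgroup K \<and> K \<subseteq> H \<and> divisible_grp K \<longrightarrow> K = {0})"

definition uniformly_strongly_coHopfian :: "'a::ab_group_add set \<Rightarrow> bool" where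
  "uniformly_strongly_coHopfian H \<longleftrightarrow>
     (\<exists>m::nat. \<forall>f. is_endo H f \<longrightarrow> (f ^^ m) ` H = (f ^^ Suc m) ` H)"

end

theory Submission
  imports Defs
begin

(* Write G = X + Y with projection p onto X along Y.  Extending an endomorphism f of a summand X
   by the identity on Y gives an endomorphism of G whose iterated images project onto those of f,
   so a uniform exponent for G serves for every summand.  Conversely, if Y is divisible and X is
   reduced, then p \<circ> \<phi> maps Y onto a divisible subgroup of X, which must be 0; so every
   endomorphism \<phi> of G leaves Y invariant and induces \<alpha> = p \<circ> \<phi> on X with
   p \<circ> \<phi> = \<alpha> \<circ> p.  If \<alpha> stabilises after mX steps and \<phi> on Y after mY steps, then \<phi>
   stabilises after mY + mX steps: an element of the mX-th image agrees modulo Y with an element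
   of the (mX+1)-th image, and the difference is absorbed by the stable images of Y. *)

definition additive_on :: "'a::ab_group_add set \<Rightarrow> ('a \<Rightarrow> 'b::ab_group_add) \<Rightarrow> bool" where
  "additive_on H f \<longleftrightarrow> (\<forall>x\<in>H. \<forall>y\<in>H. f (x + y) = f x + f y)"

lemma is_endo_iff_additive_on: "is_endo H f \<longleftrightarrow> f ` H \<subseteq> H \<and> additive_on H f"
  by (auto simp: is_endo_def additive_on_def)

lemma is_endo_funpow: "is_endo H f \<Longrightarrow> is_endo H (f ^^ n)"
  by (induction n) (simp_all add: is_endo_def)

lemma subgroup_zero: "is_subgroup H \<Longrightarrow> 0 \<in> H"
  by (simp add: is_subgroup_def)

lemma subgroup_add: "is_subgroup H \<Longrightarrow> x \<in> H \<Longrightarrow> y \<in> H \<Longrightarrow> x + y \<in> H"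
  by (simp add: is_subgroup_def)

lemma subgroup_uminus: "is_subgroup H \<Longrightarrow> x \<in> H \<Longrightarrow> - x \<in> H"
  by (simp add: is_subgroup_def)

lemma subgroup_diff: "is_subgroup H \<Longrightarrow> x \<in> H \<Longrightarrow> y \<in> H \<Longrightarrow> x - y \<in> H"
  by (metis diff_conv_add_uminus subgroup_add subgroup_uminus)

lemma subgroup_nsmul: "is_subgroup H \<Longrightarrow> x \<in> H \<Longrightarrow> nsmul n x \<in> H"
  by (induction n) (simp_all add: subgroup_zero subgroup_add)

lemma additive_on_zero: "is_subgroup H \<Longrightarrow> additive_on H f \<Longrightarrow> f 0 = 0"
  using subgroup_zero by (fastforce simp: additive_on_def)

lemma additive_on_uminus:
  assumes "is_subgroup H" "additive_on H f" "x \<in> H"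
  shows "f (- x) = - f x"
proof -
  have "f (x + - x) = f x + f (- x)"
    using assms subgroup_uminus unfolding additive_on_def by blast
  then show ?thesis
    using additive_on_zero[OF assms(1,2)] by (simp add: add_eq_0_iff)
qed

lemma additive_on_diff:
  assumes "is_subgroup H" "additive_on H f" "x \<in> H" "y \<in> H"
  shows "f (x - y) = f x - f y"
proof -
  have "f (x + - y) = f x + f (- y)"
    using assms subgroup_uminus unfolding additive_on_def by blast
  then show ?thesis
    using additive_on_uminus[OF assms(1,2,4)] by simp
qed

lemma additive_on_nsmul:
  "is_subgroup H \<Longrightarrow> additive_on H f \<Longrightarrow> x \<in> H \<Longrightarrow> f (nsmul n x) = nsmul n (f x)"
  by (induction n) (simp_all add: additive_on_zero additive_on_def subgroup_nsmul)

lemma subgroup_image: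
  assumes H: "is_subgroup H" and f: "additive_on H f"
  shows "is_subgroup (f ` H)"
  unfolding is_subgroup_def
proof (intro conjI ballI)
  show "0 \<in> f ` H"
    using additive_on_zero[OF H f] subgroup_zero[OF H] by force
next
  fix u v assume "u \<in> f ` H" "v \<in> f ` H"
  then obtain x y where "x \<in> H" "y \<in> H" "u = f x" "v = f y"
    by blast
  then have "u + v = f (x + y)" "x + y \<in> H"
    using f subgroup_add[OF H] by (auto simp: additive_on_def)
  then show "u + v \<in> f ` H"
    by blast
next
  fix u assume "u \<in> f ` H"
  then obtain x where "x \<in> H" "u = f x"
    by blast
  then have "- u = f (- x)" "- x \<in> H"
    using additive_on_uminus[OF H f] subgroup_uminus[OF H] by auto
  then show "- u \<in> f ` H"
    by blast
qed

lemma divisible_image: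
  assumes H: "is_subgroup H" and div: "divisible_grp H" and f: "additive_on H f"
  shows "divisible_grp (f ` H)"
  unfolding divisible_grp_def
proof (intro ballI allI impI)
  fix u and n :: nat assume "u \<in> f ` H" "n > 0"
  then obtain x where "x \<in> H" "u = f x"
    by blast
  with \<open>n > 0\<close> obtain y where y: "y \<in> H" "f (nsmul n y) = u"
    using div unfolding divisible_grp_def by metis
  then have "nsmul n (f y) = u"
    using additive_on_nsmul[OF H f] by simp
  then show "\<exists>v\<in>f ` H. nsmul n v = u"
    using y(1) by blast
qed

lemma additive_on_divisible_to_reduced_eq_0:
  assumes "is_subgroup H" "divisible_grp H" "additive_on H f"
    and "f ` H \<subseteq> K" "reduced_grp K" "x \<in> H"
  shows "f x = 0"
proof -
  have "is_subgroup (f ` H) \<and> f ` H \<subseteq> K \<and> divisible_grp (f ` H)"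
    using assms(4) subgroup_image[OF assms(1,3)] divisible_image[OF assms(1-3)] by blast
  then have "f ` H = {0}"
    using assms(5) unfolding reduced_grp_def by simp
  then show ?thesis
    using \<open>x \<in> H\<close> by blast
qed

lemma is_endo_restrict: "is_endo G f \<Longrightarrow> H \<subseteq> G \<Longrightarrow> f ` H \<subseteq> H \<Longrightarrow> is_endo H f"
  unfolding is_endo_def by blast

lemma funpow_image_Suc_subset: "f ` H \<subseteq> H \<Longrightarrow> (f ^^ Suc m) ` H \<subseteq> (f ^^ m) ` H"
  by (auto simp: funpow_Suc_right simp del: funpow.simps)

lemma funpow_image_stable:
  fixes f :: "'a \<Rightarrow> 'a"
  assumes "(f ^^ m) ` H = (f ^^ Suc m) ` H"
  shows "(f ^^ (m + j)) ` H = (f ^^ m) ` H"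
proof (induction j)
  case (Suc j)
  have "(f ^^ (m + Suc j)) ` H = f ` (f ^^ (m + j)) ` H"
    by (simp add: image_comp)
  also have "\<dots> = (f ^^ Suc m) ` H"
    using Suc by (simp add: image_comp)
  finally show ?case
    using assms by simp
qed simp

locale direct_sum =
  fixes X Y G :: "'a::ab_group_add set"
  assumes subgroup_X: "is_subgroup X" and subgroup_Y: "is_subgroup Y"
    and disjoint: "X \<inter> Y = {0}"
    and sum_eq: "G = {x + y | x y. x \<in> X \<and> y \<in> Y}"
begin

definition proj :: "'a \<Rightarrow> 'a" where
  "proj g = (SOME x. x \<in> X \<and> g - x \<in> Y)"

lemma X_subset: "X \<subseteq> G"
  using sum_eq subgroup_zero[OF subgroup_Y] by force

lemma Y_subset: "Y \<subseteq> G"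
  using sum_eq subgroup_zero[OF subgroup_X] by force

lemma subgroup_G: "is_subgroup G"
  unfolding is_subgroup_def
proof (intro conjI ballI)
  show "0 \<in> G"
    using X_subset subgroup_zero[OF subgroup_X] by blast
next
  fix g h assume "g \<in> G" "h \<in> G"
  then obtain x y x' y' where "g = x + y" "h = x' + y'" "x \<in> X" "y \<in> Y" "x' \<in> X" "y' \<in> Y"
    using sum_eq by auto
  moreover have "x + y + (x' + y') = (x + x') + (y + y')"
    by (simp add: algebra_simps)
  moreover have "x + x' \<in> X" "y + y' \<in> Y"
    using calculation subgroup_add[OF subgroup_X] subgroup_add[OF subgroup_Y] by auto
  ultimately show "g + h \<in> G"
    using sum_eq by blast
next
  fix g assume "g \<in> G"
  then obtain x y where "g = x + y" "x \<in> X" "y \<in> Y"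
    using sum_eq by auto
  moreover have "- (x + y) = - x + - y"
    by simp
  moreover have "- x \<in> X" "- y \<in> Y"
    using calculation subgroup_uminus[OF subgroup_X] subgroup_uminus[OF subgroup_Y] by auto
  ultimately show "- g \<in> G"
    using sum_eq by blast
qed

lemma proj_mem: "g \<in> G \<Longrightarrow> proj g \<in> X"
  and diff_proj_mem: "g \<in> G \<Longrightarrow> g - proj g \<in> Y"
proof -
  assume "g \<in> G"
  then have "\<exists>x. x \<in> X \<and> g - x \<in> Y"
    using sum_eq by force
  then show "proj g \<in> X" "g - proj g \<in> Y"
    unfolding proj_def by (metis (mono_tags, lifting) someI_ex)+
qed

lemma proj_unique:
  assumes "x \<in> X" "y \<in> Y"
  shows "proj (x + y) = x"
proof -
  have g: "x + y \<in> G"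
    using sum_eq assms by blast
  have "x - proj (x + y) = (x + y - proj (x + y)) - y"
    by simp
  also have "\<dots> \<in> Y"
    using assms(2) g diff_proj_mem subgroup_diff[OF subgroup_Y] by blast
  finally have "x - proj (x + y) \<in> X \<inter> Y"
    using assms(1) g proj_mem subgroup_diff[OF subgroup_X] by blast
  then show ?thesis
    using disjoint by simp
qed

lemma proj_X: "x \<in> X \<Longrightarrow> proj x = x"
  using proj_unique[of x 0] subgroup_zero[OF subgroup_Y] by simp

lemma proj_Y: "y \<in> Y \<Longrightarrow> proj y = 0"
  using proj_unique[of 0 y] subgroup_zero[OF subgroup_X] by simp

lemma proj_add:
  assumes "g \<in> G" "h \<in> G"
  shows "proj (g + h) = proj g + proj h"
proof -
  have "g + h = (proj g + proj h) + ((g - proj g) + (h - proj h))"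
    by (simp add: algebra_simps)
  then show ?thesis
    using assms proj_unique proj_mem diff_proj_mem
      subgroup_add[OF subgroup_X] subgroup_add[OF subgroup_Y] by metis
qed

lemma proj_image: "proj ` G = X"
  using proj_mem proj_X X_subset by force

lemma diff_mem_if_proj_eq: "g \<in> G \<Longrightarrow> h \<in> G \<Longrightarrow> proj g = proj h \<Longrightarrow> g - h \<in> Y"
  using subgroup_diff[OF subgroup_Y diff_proj_mem diff_proj_mem] by fastforce

lemma swap: "direct_sum Y X G"
  by unfold_locales (use subgroup_X subgroup_Y disjoint sum_eq in \<open>auto, (metis add.commute)+\<close>)

lemma proj_funpow:
  assumes "\<phi> ` G \<subseteq> G" "\<And>g. g \<in> G \<Longrightarrow> proj (\<phi> g) = f (proj g)" "g \<in> G"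
  shows "proj ((\<phi> ^^ j) g) = (f ^^ j) (proj g)"
proof (induction j)
  case (Suc j)
  have "(\<phi> ^^ j) g \<in> G"
    using assms(1,3) by (induction j) auto
  then show ?case
    using assms(2) Suc by simp
qed simp

lemma is_endo_extend_by_id:
  assumes f: "is_endo X f"
  shows "is_endo G (\<lambda>g. f (proj g) + (g - proj g))"
  unfolding is_endo_def
proof (intro conjI ballI)
  fix g assume g: "g \<in> G"
  then have "f (proj g) \<in> G"
    using f proj_mem X_subset by (auto simp: is_endo_def)
  then show "f (proj g) + (g - proj g) \<in> G"
    using g diff_proj_mem Y_subset subgroup_add[OF subgroup_G] by blast
next
  fix g h assume "g \<in> G" "h \<in> G"
  then show "f (proj (g + h)) + (g + h - proj (g + h)) =
      f (proj g) + (g - proj g) + (f (proj h) + (h - proj h))"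
    using f proj_add proj_mem by (simp add: is_endo_def algebra_simps)
qed

lemma summand_uniformly_strongly_coHopfian:
  assumes "uniformly_strongly_coHopfian G"
  shows "uniformly_strongly_coHopfian X"
proof -
  obtain m where m: "\<And>\<phi>. is_endo G \<phi> \<Longrightarrow> (\<phi> ^^ m) ` G = (\<phi> ^^ Suc m) ` G"
    using assms unfolding uniformly_strongly_coHopfian_def by blast
  have "(f ^^ m) ` X = (f ^^ Suc m) ` X" if f: "is_endo X f" for f
  proof -
    define \<phi> where "\<phi> g = f (proj g) + (g - proj g)" for g
    have \<phi>: "is_endo G \<phi>"
      unfolding \<phi>_def using is_endo_extend_by_id[OF f] .
    have "proj (\<phi> g) = f (proj g)" if "g \<in> G" for g
      unfolding \<phi>_def using that f proj_unique proj_mem diff_proj_mem by (simp add: is_endo_def)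
    then have "(f ^^ j) ` proj ` G = proj ` (\<phi> ^^ j) ` G" for j
      using \<phi> proj_funpow[of \<phi> f] by (force simp: is_endo_def image_comp)
    then show ?thesis
      using m[OF \<phi>] proj_image by metis
  qed
  then show ?thesis
    unfolding uniformly_strongly_coHopfian_def by blast
qed

lemma additive_on_proj_comp:
  assumes "is_endo G \<phi>" "H \<subseteq> G"
  shows "additive_on H (\<lambda>x. proj (\<phi> x))"
  unfolding additive_on_def
proof (intro ballI)
  fix x y assume "x \<in> H" "y \<in> H"
  then have "x \<in> G" "y \<in> G"
    using assms(2) by auto
  then show "proj (\<phi> (x + y)) = proj (\<phi> x) + proj (\<phi> y)"
    using assms(1) proj_add by (simp add: is_endo_def)
qed

lemma endo_maps_divisible_summand:
  assumes "reduced_grp X" "divisible_grp Y" "is_endo G \<phi>" "y \<in> Y"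
  shows "\<phi> y \<in> Y"
proof -
  have "(\<lambda>y. proj (\<phi> y)) ` Y \<subseteq> X"
    using assms(3) Y_subset proj_mem unfolding is_endo_def by blast
  then have "proj (\<phi> y) = 0"
    using additive_on_divisible_to_reduced_eq_0[OF subgroup_Y assms(2)
        additive_on_proj_comp[OF assms(3) Y_subset] _ assms(1,4)] by blast
  moreover have "\<phi> y \<in> G"
    using assms(3,4) Y_subset unfolding is_endo_def by blast
  ultimately show ?thesis
    using diff_proj_mem by fastforce
qed

lemma is_endo_proj_comp:
  assumes "is_endo G \<phi>"
  shows "is_endo X (\<lambda>x. proj (\<phi> x))"
proof -
  have "(\<lambda>x. proj (\<phi> x)) ` X \<subseteq> X"
    using assms X_subset proj_mem unfolding is_endo_def by blast
  then show ?thesis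
    using additive_on_proj_comp[OF assms X_subset] by (simp add: is_endo_iff_additive_on)
qed

lemma proj_endo_proj:
  assumes \<phi>: "is_endo G \<phi>" and inv: "\<phi> ` Y \<subseteq> Y" and g: "g \<in> G"
  shows "proj (\<phi> g) = proj (\<phi> (proj g))"
proof -
  have parts: "proj g \<in> G" "g - proj g \<in> Y" "g - proj g \<in> G"
    using g proj_mem diff_proj_mem X_subset Y_subset by blast+
  then have "\<phi> (proj g + (g - proj g)) = \<phi> (proj g) + \<phi> (g - proj g)"
    using \<phi> unfolding is_endo_def by blast
  moreover have "\<phi> (proj g) \<in> G" "\<phi> (g - proj g) \<in> Y" "\<phi> (g - proj g) \<in> G"
    using \<phi> inv parts Y_subset unfolding is_endo_def by blast+
  ultimately show ?thesis
    using proj_add proj_Y by simp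
qed

lemma funpow_image_stable_of_invariant_summand:
  assumes \<phi>: "is_endo G \<phi>" and inv: "\<phi> ` Y \<subseteq> Y"
    and stable_X: "((\<lambda>x. proj (\<phi> x)) ^^ mX) ` X = ((\<lambda>x. proj (\<phi> x)) ^^ Suc mX) ` X"
    and stable_Y: "(\<phi> ^^ mY) ` Y = (\<phi> ^^ Suc mY) ` Y"
  shows "(\<phi> ^^ (mY + mX)) ` G = (\<phi> ^^ Suc (mY + mX)) ` G"
proof
  show "(\<phi> ^^ Suc (mY + mX)) ` G \<subseteq> (\<phi> ^^ (mY + mX)) ` G"
    using \<phi> by (intro funpow_image_Suc_subset) (auto simp: is_endo_def)
next
  define \<alpha> where "\<alpha> x = proj (\<phi> x)" for x
  define n where "n = Suc (mY + mX)"
  have \<phi>_pow: "is_endo G (\<phi> ^^ k)" for k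
    using is_endo_funpow[OF \<phi>] .
  have "\<phi> ` G \<subseteq> G"
    using \<phi> by (auto simp: is_endo_def)
  moreover have "proj (\<phi> g) = \<alpha> (proj g)" if "g \<in> G" for g
    using proj_endo_proj[OF \<phi> inv that] by (simp add: \<alpha>_def)
  ultimately have proj_pow: "proj ((\<phi> ^^ k) g) = (\<alpha> ^^ k) (proj g)" if "g \<in> G" for g k
    using proj_funpow that by blast
  show "(\<phi> ^^ (mY + mX)) ` G \<subseteq> (\<phi> ^^ n) ` G" unfolding n_def[symmetric]
  proof
    fix z assume "z \<in> (\<phi> ^^ (mY + mX)) ` G"
    then obtain g where g: "g \<in> G" and z: "z = (\<phi> ^^ mY) ((\<phi> ^^ mX) g)"
      by (auto simp: funpow_add)
    obtain a where a: "a \<in> X" "(\<alpha> ^^ Suc mX) a = (\<alpha> ^^ mX) (proj g)"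
      using stable_X proj_mem[OF g] unfolding \<alpha>_def[abs_def] by (metis image_iff imageI)
    define u where "u = (\<phi> ^^ mX) g"
    define v where "v = (\<phi> ^^ Suc mX) a"
    have uv: "u \<in> G" "v \<in> G"
      unfolding u_def v_def using \<phi>_pow g a(1) X_subset unfolding is_endo_def by blast+
    have "proj u = (\<alpha> ^^ mX) (proj g)"
      unfolding u_def using proj_pow[OF g] .
    moreover have "proj v = (\<alpha> ^^ Suc mX) a"
      unfolding v_def using proj_pow[OF subsetD[OF X_subset a(1)]] proj_X[OF a(1)] by metis
    ultimately have "u - v \<in> Y"
      using diff_mem_if_proj_eq[OF uv] a(2) by simp
    then obtain e where e: "e \<in> Y" "(\<phi> ^^ mY) (u - v) = (\<phi> ^^ n) e"
      using funpow_image_stable[OF stable_Y, of "Suc mX"] unfolding n_def by auto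
    have v_eq: "(\<phi> ^^ mY) v = (\<phi> ^^ n) a"
      unfolding v_def n_def by (metis add_Suc_right comp_apply funpow_add)
    have "z = (\<phi> ^^ mY) v + (\<phi> ^^ mY) (u - v)"
      using z additive_on_diff[OF subgroup_G _ uv, of "\<phi> ^^ mY"] \<phi>_pow[of mY]
      by (simp add: u_def is_endo_iff_additive_on)
    also have "\<dots> = (\<phi> ^^ n) a + (\<phi> ^^ n) e"
      using v_eq e(2) by simp
    also have "\<dots> = (\<phi> ^^ n) (a + e)"
      using \<phi>_pow[of n] a(1) e(1) X_subset Y_subset unfolding is_endo_def by (metis subsetD)
    finally show "z \<in> (\<phi> ^^ n) ` G"
      using subgroup_add[OF subgroup_G] a(1) e(1) X_subset Y_subset by blast
  qed
qed

lemma uniformly_strongly_coHopfian_if_invariant_summand: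
  assumes inv: "\<And>\<phi>. is_endo G \<phi> \<Longrightarrow> \<phi> ` Y \<subseteq> Y"
    and "uniformly_strongly_coHopfian X" "uniformly_strongly_coHopfian Y"
  shows "uniformly_strongly_coHopfian G"
proof -
  obtain mX where mX: "\<And>f. is_endo X f \<Longrightarrow> (f ^^ mX) ` X = (f ^^ Suc mX) ` X"
    using assms(2) unfolding uniformly_strongly_coHopfian_def by blast
  obtain mY where mY: "\<And>f. is_endo Y f \<Longrightarrow> (f ^^ mY) ` Y = (f ^^ Suc mY) ` Y"
    using assms(3) unfolding uniformly_strongly_coHopfian_def by blast
  have "(\<phi> ^^ (mY + mX)) ` G = (\<phi> ^^ Suc (mY + mX)) ` G" if \<phi>: "is_endo G \<phi>" for \<phi>
  proof -
    have "is_endo Y \<phi>"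
      using is_endo_restrict[OF \<phi> Y_subset inv[OF \<phi>]] .
    then show ?thesis
      using funpow_image_stable_of_invariant_summand[OF \<phi> inv[OF \<phi>]]
        mX[OF is_endo_proj_comp[OF \<phi>]] mY by blast
  qed
  then show ?thesis
    unfolding uniformly_strongly_coHopfian_def by blast
qed

end

theorem mainTheorem10:
  fixes G A D :: "'a::ab_group_add set"
  assumes "is_subgroup A" and "is_subgroup D"
    and "A \<inter> D = {0}"
    and "G = {a + d | a d. a \<in> A \<and> d \<in> D}"
    and "reduced_grp A" and "divisible_grp D"
  shows "uniformly_strongly_coHopfian G \<longleftrightarrow>
         uniformly_strongly_coHopfian A \<and> uniformly_strongly_coHopfian D"
proof -
  interpret direct_sum A D G
    using assms(1-4) by unfold_locales
  interpret swapped: direct_sum D A G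
    by (rule swap)
  have "\<phi> ` D \<subseteq> D" if "is_endo G \<phi>" for \<phi>
    using endo_maps_divisible_summand[OF assms(5,6) that] by blast
  then show ?thesis
    using summand_uniformly_strongly_coHopfian swapped.summand_uniformly_strongly_coHopfian
      uniformly_strongly_coHopfian_if_invariant_summand by blast
qed

end
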